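(* Let $A$ be a VPA with $\emptyset\subsetneq\mathcal L(A)\subsetneq\Sigma^*$ and assume $S_0$ is bounded. For each $\tau\in Q^Q$ let $R_\tau$ be a bounded overapproximation of $\tau^{-1}S_1$, and let $\mathrm{RegFlat}=R_0(\Sigma_c\cup R_1)^*$ where $R_1=\bigcup_{\tau\in Q^Q}\tau R_\tau$ and $R_0=\bigcup_{\tau\in Q^Q}\mathsf{Suf}(R_\tau)$. If $\mathrm{RegFlat}$ contains a linear fooling set for $\nu_f$, then $\mathrm{Flat}$ also contains a linear fooling set for $\nu_f$.
   Context: VPA $A=(Q,\Sigma,\Gamma,\bot,q_0,\delta,F)$ over a pushdown alphabet $\Sigma=\Sigma_c\cup\Sigma_r\cup\Sigma_{\mathit{int}}$ ($\Sigma_c,\Sigma_r\ne\emptyset$), with configurations $\alpha q$ ($\alpha\in\bot(\Gamma\setminus\{\bot\})^*$), call letters pushing via $\delta_c:Q\times\Sigma_c\to(\Gamma\setminus\{\bot\})\times Q$, internal letters via $\delta_{\mathit{int}}:Q\times\Sigma_{\mathit{int}}\to Q$, return letters popping the top $\gamma\ne\bot$ via $\delta_r:Q\times\Sigma_r\times\Gamma\to Q$ (or reading $\bot$ without popping). $\delta(c,w)$ is the configuration reached; $\mathcal L(c)$ the words leading from $c$ to a state in $F$. $W$: well-matched words (smallest set containing $\varepsilon$, $\Sigma_{\mathit{int}}$, closed under concatenation and $w\mapsto awb$, $a\in\Sigma_c$, $b\in\Sigma_r$); $D$: descending words (products of well-matched words and return letters); $\varphi:W\to Q^Q$ with $\delta(\alpha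 p,w)=\alpha\varphi(w)(p)$. $\mathrm{rConf}$: configurations reachable from $\bot q_0$; $\mathsf{rep}(c)$: length-lexicographically least (for fixed linear orders on $\Gamma,Q$) $c'\in\mathrm{rConf}$ with $\mathcal L(c')=\mathcal L(c)$; $\nu_A(w)=\mathsf{rep}(\delta(\bot q_0,w))$. For $w=a_1\cdots a_n\in D$, $\nu_A(a_i\cdots a_n)=\bot q_i$; $\sigma_0(w)=q_1\cdots q_n$; for nonempty $w\in W$, $\sigma_1(w)=\varphi(w)q_2\cdots q_n$. $S_0=\sigma_0(D)$, $S_1=\sigma_1(W\setminus\{\varepsilon\})$. $\Sigma_f=\Sigma_c\cup Q\cup Q^Q$ (disjoint); $\mathrm{AllFlat}=Q^*(\Sigma_c\cup Q^QQ^* )^*$ with unique factorization $s_0s_1\cdots s_m$, $s_0\in Q^*$, $s_i\in\Sigma_c\cup Q^QQ^*$. $t_f$: $t_f(\varepsilon)=\bot q_0$, $t_f(q_1\cdots q_n)=\bot q_1$ ($n\ge1$), $t_f(s_0\cdots s_m)=\delta(t_f(s_0\cdots s_{m-1}),s_m)$ if $s_m\in\Sigma_c$, and $=\alpha\tau(q)$ if $s_m=\tau q_2\cdots q_k$ and $t_f(s_0\cdots s_{m-1})=\alpha q$. $\nu_f=\mathsf{rep}\circ t_f$ with domain $\mathrm{AllFlat}$. $\mathrm{Flat}=S_0(\Sigma_c\cup S_1)^*$. Bounded language: subset of $w_1^*\cdots w_k^*$. $\tau^{-1}S_1=\{x:\tau x\in S_1\}$. $\Psi(a_1\cdots a_n)=\{(a_i,n-i+1)\}$,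 $\Psi(K)=\bigcup_{w\in K}\Psi(w)$. A bounded overapproximation of a bounded context-free $K$ is a bounded regular $R\supseteq K$ with $\{|w|:w\in K\}=\{|w|:w\in R\}$ and $\Psi(K)=\Psi(R)$. $\mathsf{Suf}(L)$: all suffixes of words of $L$. A linear fooling scheme for a partial function $t$ on $\Sigma_f^*$ is $(u_2,v_2,u,v,Z)$ with $u_2$ a suffix of $u$, $v_2$ a suffix of $v$, $|u_2|=|v_2|$, $\{u_2,v_2\}\{u,v\}^*Z\subseteq\mathrm{dom}(t)$, and for each $n$ some $z_n\in Z$ with $|z_n|\in O(n)$ and $t(u_2wz_n)\ne t(v_2wz_n)$ for all $w\in\{u,v\}^{\le n}$; the set $\{u_2,v_2\}\{u,v\}^*Z$ is a linear fooling set, and a language contains one if such a set is a subset of it. *)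

theory Defs
  imports Main "HOL-Library.Landau_Symbols"
begin

text \<open>States are the finite linearly ordered type 'q
 (Q = UNIV), stack symbols the finite linearly ordered type 'g (Gamma = UNIV).\<close>

datatype kind = Call | Ret | Internal

record ('a, 'q, 'g) vpa =
  kind :: "'a \<Rightarrow> kind"
  bot  :: 'g
  q0   :: 'q
  dcall :: "'q \<Rightarrow> 'a \<Rightarrow> 'g \<times> 'q"
  dint  :: "'q \<Rightarrow> 'a \<Rightarrow> 'q"
  dret  :: "'q \<Rightarrow> 'a \<Rightarrow> 'g \<Rightarrow> 'q"
  fin   :: "'q set"

definition wf_vpa :: "('a::finite, 'q::{finite,linorder}, 'g::{finite,linorder}) vpa \<Rightarrow> bool" where
  "wf_vpa A \<longleftrightarrow> (\<exists>a. kind A a = Call) \<and> (\<exists>b. kind A b = Ret)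
     \<and> (\<forall>q a. fst (dcall A q a) \<noteq> bot A)"

text \<open>A configuration alpha q: alpha is the stack written bottom-first
 (so its first symbol is bot and its last symbol is the top), q the state.\<close>
type_synonym ('q, 'g) conf = "'g list \<times> 'q"

definition step :: "('a, 'q, 'g) vpa \<Rightarrow> ('q, 'g) conf \<Rightarrow> 'a \<Rightarrow> ('q, 'g) conf" where
  "step A c x = (let (\<alpha>, q) = c in
     (case kind A x of
        Call \<Rightarrow> (let (g, p) = dcall A q x in (\<alpha> @ [g], p))
      | Internal \<Rightarrow> (\<alpha>, dint A q x)
      | Ret \<Rightarrow> (if last \<alpha> = bot A then (\<alpha>, dret A q x (bot A))
               else (butlast \<alpha>, dret A q x (last \<alpha>)))))"

definition delta :: "('a, 'q, 'g) vpa \<Rightarrow> ('q, 'g) conf \<Rightarrow> 'a list \<Rightarrow> ('q, 'g) conf" where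
  "delta A c w = foldl (step A) c w"

definition init_conf :: "('a, 'q, 'g) vpa \<Rightarrow> ('q, 'g) conf" where
  "init_conf A = ([bot A], q0 A)"

definition lang_conf :: "('a, 'q, 'g) vpa \<Rightarrow> ('q, 'g) conf \<Rightarrow> 'a list set" where
  "lang_conf A c = {w. snd (delta A c w) \<in> fin A}"

definition lang :: "('a, 'q, 'g) vpa \<Rightarrow> 'a list set" where
  "lang A = lang_conf A (init_conf A)"

definition rConf :: "('a, 'q, 'g) vpa \<Rightarrow> ('q, 'g) conf set" where
  "rConf A = {delta A (init_conf A) w | w. True}"

definition conf_word :: "('q, 'g) conf \<Rightarrow> ('g + 'q) list" where
  "conf_word c = map Inl (fst c) @ [Inr (snd c)]"

definition sym_less :: "(('g::linorder + 'q::linorder) \<times> ('g + 'q)) set" where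
  "sym_less = {(Inl x, Inl y) | x y. x < y} \<union> {(Inr x, Inr y) | x y. x < y}"

definition conf_less :: "('q::linorder, 'g::linorder) conf \<Rightarrow> ('q, 'g) conf \<Rightarrow> bool" where
  "conf_less c d \<longleftrightarrow> (conf_word c, conf_word d) \<in> lenlex sym_less"

definition rep :: "('a, 'q::linorder, 'g::linorder) vpa \<Rightarrow> ('q, 'g) conf \<Rightarrow> ('q, 'g) conf option" where
  "rep A c = (if \<exists>c'\<in>rConf A. lang_conf A c' = lang_conf A c
     then Some (THE c'. c' \<in> rConf A \<and> lang_conf A c' = lang_conf A c \<and>
                 (\<forall>d\<in>rConf A. lang_conf A d = lang_conf A c \<longrightarrow> d = c' \<or> conf_less c' d))
     else None)"

definition nuA :: "('a, 'q::linorder, 'g::linorder) vpa \<Rightarrow> 'a list \<Rightarrow> ('q, 'g) conf option" where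
  "nuA A w = rep A (delta A (init_conf A) w)"

inductive_set WM :: "('a, 'q, 'g) vpa \<Rightarrow> 'a list set" for A where
  wm_eps: "[] \<in> WM A"
| wm_int: "kind A i = Internal \<Longrightarrow> [i] \<in> WM A"
| wm_cat: "u \<in> WM A \<Longrightarrow> v \<in> WM A \<Longrightarrow> u @ v \<in> WM A"
| wm_nest: "kind A a = Call \<Longrightarrow> kind A b = Ret \<Longrightarrow> w \<in> WM A \<Longrightarrow> a # w @ [b] \<in> WM A"

inductive_set Desc :: "('a, 'q, 'g) vpa \<Rightarrow> 'a list set" for A where
  desc_eps: "[] \<in> Desc A"
| desc_wm: "w \<in> WM A \<Longrightarrow> v \<in> Desc A \<Longrightarrow> w @ v \<in> Desc A"
| desc_ret: "kind A b = Ret \<Longrightarrow> v \<in> Desc A \<Longrightarrow> b # v \<in> Desc A"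

text \<open>phi(w): the state transformation of a well-matched word, delta(alpha p, w) = alpha phi(w)(p).\<close>
definition phi :: "('a, 'q, 'g) vpa \<Rightarrow> 'a list \<Rightarrow> 'q \<Rightarrow> 'q" where
  "phi A w = (\<lambda>p. snd (delta A ([bot A], p) w))"

text \<open>Sigma_f = Sigma_c + Q + Q^Q (disjoint union); only FC a with a a call letter belong to Sigma_f.\<close>
datatype ('a, 'q) fsym = FC 'a | FQ 'q | FT "'q \<Rightarrow> 'q"

text \<open>For w = a_1...a_n descending, nu_A(a_i...a_n) = bot q_i; sigma0 w = q_1...q_n.\<close>
definition sigma0 :: "('a, 'q::linorder, 'g::linorder) vpa \<Rightarrow> 'a list \<Rightarrow> 'q list" where
  "sigma0 A w = map (\<lambda>i. snd (the (nuA A (drop i w)))) [0..<length w]"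

definition sigma1 :: "('a, 'q::linorder, 'g::linorder) vpa \<Rightarrow> 'a list \<Rightarrow> ('a, 'q) fsym list" where
  "sigma1 A w = FT (phi A w) # map FQ (tl (sigma0 A w))"

definition S0 :: "('a, 'q::linorder, 'g::linorder) vpa \<Rightarrow> ('a, 'q) fsym list set" where
  "S0 A = (\<lambda>w. map FQ (sigma0 A w)) ` Desc A"

definition S1 :: "('a, 'q::linorder, 'g::linorder) vpa \<Rightarrow> ('a, 'q) fsym list set" where
  "S1 A = sigma1 A ` (WM A - {[]})"

definition conc :: "'b list set \<Rightarrow> 'b list set \<Rightarrow> 'b list set" where
  "conc K L = {u @ v | u v. u \<in> K \<and> v \<in> L}"

definition kstar :: "'b list set \<Rightarrow> 'b list set" where
  "kstar L = {concat ws | ws. set ws \<subseteq> L}"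

definition Suf :: "'b list set \<Rightarrow> 'b list set" where
  "Suf L = {v. \<exists>u. u @ v \<in> L}"

definition calls_f :: "('a, 'q, 'g) vpa \<Rightarrow> ('a, 'q) fsym list set" where
  "calls_f A = {[FC a] | a. kind A a = Call}"

definition lquot :: "('q \<Rightarrow> 'q) \<Rightarrow> ('a, 'q) fsym list set \<Rightarrow> ('a, 'q) fsym list set" where
  "lquot \<tau> L = {x. FT \<tau> # x \<in> L}"

definition Flat :: "('a, 'q::linorder, 'g::linorder) vpa \<Rightarrow> ('a, 'q) fsym list set" where
  "Flat A = conc (S0 A) (kstar (calls_f A \<union> S1 A))"

text \<open>AllFlat = Q^*(Sigma_c \<union> Q^Q Q^*)^*, with its (unique) factorization s0 s1 ... sm.\<close>
definition qwords :: "('a, 'q) fsym list set" where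
  "qwords = {map FQ qs | qs. True}"

definition flat_factor :: "('a, 'q, 'g) vpa \<Rightarrow> ('a, 'q) fsym list set" where
  "flat_factor A = calls_f A \<union> {FT \<tau> # x | \<tau> x. x \<in> qwords}"

definition is_fact :: "('a, 'q, 'g) vpa \<Rightarrow> ('a, 'q) fsym list \<Rightarrow> ('a, 'q) fsym list \<times> ('a, 'q) fsym list list \<Rightarrow> bool" where
  "is_fact A w f \<longleftrightarrow> w = fst f @ concat (snd f) \<and> fst f \<in> qwords \<and> set (snd f) \<subseteq> flat_factor A"

definition AllFlat :: "('a, 'q, 'g) vpa \<Rightarrow> ('a, 'q) fsym list set" where
  "AllFlat A = {w. \<exists>f. is_fact A w f}"

fun unFQ :: "('a, 'q) fsym \<Rightarrow> 'q" where
  "unFQ (FQ q) = q"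
| "unFQ _ = undefined"

fun tf_step :: "('a, 'q, 'g) vpa \<Rightarrow> ('q, 'g) conf \<Rightarrow> ('a, 'q) fsym list \<Rightarrow> ('q, 'g) conf" where
  "tf_step A c (FC a # _) = delta A c [a]"
| "tf_step A c (FT \<tau> # _) = (fst c, \<tau> (snd c))"
| "tf_step A c _ = c"

definition tf_fact :: "('a, 'q, 'g) vpa \<Rightarrow> ('a, 'q) fsym list \<times> ('a, 'q) fsym list list \<Rightarrow> ('q, 'g) conf" where
  "tf_fact A f = foldl (tf_step A)
     (if fst f = [] then init_conf A else ([bot A], unFQ (hd (fst f)))) (snd f)"

definition tf :: "('a, 'q, 'g) vpa \<Rightarrow> ('a, 'q) fsym list \<Rightarrow> ('q, 'g) conf" where
  "tf A w = tf_fact A (THE f. is_fact A w f)"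

definition nu_f :: "('a, 'q::linorder, 'g::linorder) vpa \<Rightarrow> ('a, 'q) fsym list \<Rightarrow> ('q, 'g) conf option" where
  "nu_f A w = (if w \<in> AllFlat A then rep A (tf A w) else None)"

fun star_prod :: "'b list list \<Rightarrow> 'b list set" where
  "star_prod [] = {[]}"
| "star_prod (w # ws) = {concat (replicate n w) @ v | n v. v \<in> star_prod ws}"

definition bounded_lang :: "'b list set \<Rightarrow> bool" where
  "bounded_lang L \<longleftrightarrow> (\<exists>ws. L \<subseteq> star_prod ws)"

definition regular_lang :: "'b list set \<Rightarrow> bool" where
  "regular_lang L \<longleftrightarrow> (\<exists>(n::nat) (d :: nat \<Rightarrow> 'b \<Rightarrow> nat) s F.
      s < n \<and> (\<forall>q<n. \<forall>x. d q x < n) \<and> L = {w. foldl d s w \<in> F})"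

definition Psi_w :: "'b list \<Rightarrow> ('b \<times> nat) set" where
  "Psi_w w = {(w ! i, length w - i) | i. i < length w}"

definition Psi :: "'b list set \<Rightarrow> ('b \<times> nat) set" where
  "Psi K = (\<Union>w\<in>K. Psi_w w)"

definition bounded_overapprox :: "'b list set \<Rightarrow> 'b list set \<Rightarrow> bool" where
  "bounded_overapprox K R \<longleftrightarrow> bounded_lang R \<and> regular_lang R \<and> K \<subseteq> R
     \<and> length ` K = length ` R \<and> Psi K = Psi R"

definition fool_set :: "'b list \<Rightarrow> 'b list \<Rightarrow> 'b list \<Rightarrow> 'b list \<Rightarrow> 'b list set \<Rightarrow> 'b list set" where
  "fool_set u2 v2 u v Z = conc {u2, v2} (conc (kstar {u, v}) Z)"

definition upto_pow :: "'b list \<Rightarrow> 'b list \<Rightarrow> nat \<Rightarrow> 'b list set" where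
  "upto_pow u v n = {concat ws | ws. set ws \<subseteq> {u, v} \<and> length ws \<le> n}"

definition linear_fooling_scheme ::
  "('b list \<Rightarrow> 'c option) \<Rightarrow> 'b list \<Rightarrow> 'b list \<Rightarrow> 'b list \<Rightarrow> 'b list \<Rightarrow> 'b list set \<Rightarrow> bool" where
  "linear_fooling_scheme t u2 v2 u v Z \<longleftrightarrow>
     (\<exists>x. u = x @ u2) \<and> (\<exists>y. v = y @ v2) \<and> length u2 = length v2 \<and>
     fool_set u2 v2 u v Z \<subseteq> {w. t w \<noteq> None} \<and>
     (\<exists>z :: nat \<Rightarrow> 'b list. (\<forall>n. z n \<in> Z) \<and>
        (\<lambda>n. real (length (z n))) \<in> O(\<lambda>n. real n) \<and>
        (\<forall>n. \<forall>w\<in>upto_pow u v n. t (u2 @ w @ z n) \<noteq> t (v2 @ w @ z n)))"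

definition contains_lin_fooling_set :: "'b list set \<Rightarrow> ('b list \<Rightarrow> 'c option) \<Rightarrow> bool" where
  "contains_lin_fooling_set L t \<longleftrightarrow>
     (\<exists>u2 v2 u v Z. linear_fooling_scheme t u2 v2 u v Z \<and> fool_set u2 v2 u v Z \<subseteq> L)"

definition RegFlat :: "('a, 'q, 'g) vpa \<Rightarrow> (('q \<Rightarrow> 'q) \<Rightarrow> ('a, 'q) fsym list set) \<Rightarrow> ('a, 'q) fsym list set" where
  "RegFlat A R = conc (\<Union>\<tau>. Suf (R \<tau>)) (kstar (calls_f A \<union> (\<Union>\<tau>. (\<lambda>x. FT \<tau> # x) ` R \<tau>)))"

end

theory Submission
  imports Defs
begin

text \<open>
  On a flat word, \<open>\<nu>\<^sub>f\<close> depends only on the first letter, if that is a state, and on the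
  letters from \<open>\<Sigma>\<^sub>c \<union> Q\<^sup>Q\<close>. Cut a word into blocks, each a letter of \<open>\<Sigma>\<^sub>c \<union> Q\<^sup>Q\<close> followed by
  the run of states behind it. Since \<open>R\<^sub>\<tau>\<close> and \<open>\<tau>\<^sup>-\<^sup>1S\<^sub>1\<close> have the same word lengths, every
  block \<open>\<tau>y\<close> with \<open>y \<in> R\<^sub>\<tau>\<close> can be replaced by a block \<open>\<tau>x\<close> of \<open>S\<^sub>1\<close> of the same length.
  This preserves \<open>\<nu>\<^sub>f\<close> and lengths, and so carries a linear fooling scheme
  \<open>(u\<^sub>2, v\<^sub>2, u, v, Z)\<close> in \<open>RegFlat\<close> over to \<open>Flat\<close>, with \<open>u, v\<close> replaced by the images of
  \<open>cu, cv\<close> for a word \<open>c \<in> {u, v}\<close> containing such a letter. The last block of \<open>cu\<close> runs on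
  into the following \<open>u\<^sub>2\<close>; there it is cut with the help of the \<open>\<Psi>\<close>-condition, which gives
  a word of \<open>\<tau>\<^sup>-\<^sup>1S\<^sub>1\<close> ending in a word of \<open>S\<^sub>0\<close> with the right length and first letter.
  If \<open>u\<close> and \<open>v\<close> contain no such letter, all of \<open>{u, v}\<^sup>*\<close> occurs in the bounded language
  \<open>\<Union>\<^sub>\<tau> R\<^sub>\<tau>\<close>. That forces \<open>uv = vu\<close>, hence \<open>u\<^sub>2 = v\<^sub>2\<close>, which no fooling scheme allows.
\<close>

lemma kstar_iff: "w \<in> kstar L \<longleftrightarrow> (\<exists>ws. w = concat ws \<and> set ws \<subseteq> L)"
  by (auto simp: kstar_def)

lemma kstar_Nil [simp]: "[] \<in> kstar L"
  unfolding kstar_iff by (auto intro: exI[of _ "[]"])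

lemma kstar_singleton: "x \<in> L \<Longrightarrow> x \<in> kstar L"
  unfolding kstar_iff by (auto intro: exI[of _ "[x]"])

lemma kstar_append: "x \<in> kstar L \<Longrightarrow> y \<in> kstar L \<Longrightarrow> x @ y \<in> kstar L"
  unfolding kstar_iff by (metis concat_append set_append sup.boundedI)

lemma kstar_concat: "set ws \<subseteq> kstar L \<Longrightarrow> concat ws \<in> kstar L"
  by (induction ws) (auto intro: kstar_append)

lemma kstar_list_all: "w \<in> kstar L \<Longrightarrow> \<forall>x\<in>L. list_all P x \<Longrightarrow> list_all P w"
  by (fastforce simp: kstar_iff list_all_iff)

lemma upto_pow_concat:
  assumes "set ws \<subseteq> upto_pow u v m"
  shows "concat ws \<in> upto_pow u v (m * length ws)"
  using assms
proof (induction ws)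
  case Nil
  show ?case by (auto simp: upto_pow_def intro: exI[of _ "[]"])
next
  case (Cons w ws)
  then obtain xs ys where "w = concat xs" "set xs \<subseteq> {u, v}" "length xs \<le> m"
    and "concat ws = concat ys" "set ys \<subseteq> {u, v}" "length ys \<le> m * length ws"
    by (auto simp: upto_pow_def)
  then show ?case
    unfolding upto_pow_def by (auto intro!: exI[of _ "xs @ ys"])
qed

lemma upto_pow_mono: "m \<le> n \<Longrightarrow> upto_pow u v m \<subseteq> upto_pow u v n"
  by (auto simp: upto_pow_def)

lemma upto_pow_kstar: "upto_pow u v n \<subseteq> kstar {u, v}"
  by (auto simp: upto_pow_def kstar_def)

section \<open>Factors of bounded languages\<close>

lemma Nil_in_star_prod: "[] \<in> star_prod ws"
  by (induction ws) (auto intro: exI[of _ 0])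

lemma star_prod_append:
  "x \<in> star_prod ws \<Longrightarrow> y \<in> star_prod ws' \<Longrightarrow> x @ y \<in> star_prod (ws @ ws')"
  by (induction ws arbitrary: x) fastforce+

lemma bounded_lang_Un:
  assumes "bounded_lang K" "bounded_lang L"
  shows "bounded_lang (K \<union> L)"
proof -
  obtain ws ws' where "K \<subseteq> star_prod ws" "L \<subseteq> star_prod ws'"
    using assms by (auto simp: bounded_lang_def)
  then have "K \<union> L \<subseteq> star_prod (ws @ ws')"
    using star_prod_append[OF _ Nil_in_star_prod, of _ ws ws']
      star_prod_append[OF Nil_in_star_prod, of _ ws' ws] by auto
  then show ?thesis by (auto simp: bounded_lang_def)
qed

lemma bounded_lang_UN:
  "finite I \<Longrightarrow> (\<And>i. i \<in> I \<Longrightarrow> bounded_lang (L i)) \<Longrightarrow> bounded_lang (\<Union>i\<in>I. L i)"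
proof (induction I rule: finite_induct)
  case empty
  show ?case by (simp add: bounded_lang_def)
next
  case (insert i I)
  then show ?case by (simp add: bounded_lang_Un)
qed

definition factors_of_length :: "'b list set \<Rightarrow> nat \<Rightarrow> 'b list set" where
  "factors_of_length L N = {f. length f = N \<and> (\<exists>a b. a @ f @ b \<in> L)}"

lemma nth_concat_replicate:
  "i < n * length w \<Longrightarrow> concat (replicate n w) ! i = w ! (i mod length w)"
proof (induction n arbitrary: i)
  case (Suc n)
  then show ?case
    by (cases "i < length w") (auto simp: nth_append le_mod_geq)
qed simp

text \<open>A factor of a power of \<open>w\<close> is determined by its length and its offset modulo \<open>|w|\<close>.\<close>
lemma factors_of_length_power:
  "factors_of_length (star_prod [w]) N
     \<subseteq> insert [] ((\<lambda>r. map (\<lambda>j. w ! ((r + j) mod length w)) [0..<N]) ` {..<length w})"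
proof
  fix f assume "f \<in> factors_of_length (star_prod [w]) N"
  then obtain a b n where f: "length f = N" "a @ f @ b = concat (replicate n w)"
    by (auto simp: factors_of_length_def)
  show "f \<in> insert [] ((\<lambda>r. map (\<lambda>j. w ! ((r + j) mod length w)) [0..<N]) ` {..<length w})"
  proof (cases "N = 0")
    case False
    then have "w \<noteq> []" using f by auto
    have len: "length (a @ f @ b) = n * length w"
      by (simp only: f(2) length_concat map_replicate sum_list_replicate) simp
    have "f = map (\<lambda>j. w ! ((length a mod length w + j) mod length w)) [0..<N]"
    proof (rule nth_equalityI)
      fix j assume j: "j < length f"
      then have "f ! j = (a @ f @ b) ! (length a + j)" by (simp add: nth_append)
      also have "\<dots> = w ! ((length a + j) mod length w)"
        unfolding f(2) using len j by (intro nth_concat_replicate) simp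
      finally show "f ! j = map (\<lambda>j. w ! ((length a mod length w + j) mod length w)) [0..<N] ! j"
        using j f(1) by (simp add: mod_add_left_eq)
    qed (simp add: f)
    with \<open>w \<noteq> []\<close> show ?thesis by auto
  qed (use f in simp)
qed

lemma factor_of_append:
  assumes "a @ f @ b = x @ y"
  shows "\<exists>s p. f = s @ p \<and> (\<exists>a' b'. a' @ s @ b' = x) \<and> (\<exists>a' b'. a' @ p @ b' = y)"
proof -
  from assms consider (right) us where "a = x @ us" "us @ f @ b = y"
    | (left) us where "a @ us = x" "f @ b = us @ y"
    by (auto simp: append_eq_append_conv2)
  then show ?thesis
  proof cases
    case right
    then show ?thesis by (metis append_Nil)
  next
    case left
    from left(2) consider (across) us' where "f = us @ us'" "us' @ b = y"
      | (inside) us' where "f @ us' = us" "b = us' @ y"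
      by (auto simp: append_eq_append_conv2)
    then show ?thesis
    proof cases
      case across
      then show ?thesis using left(1) by (metis append_Nil append_Nil2)
    next
      case inside
      then show ?thesis using left(1) by (metis append_Nil append_Nil2)
    qed
  qed
qed

lemma factors_of_length_star_prod_Cons:
  "factors_of_length (star_prod (w # ws)) N
     \<subseteq> (\<Union>j\<le>N. (\<lambda>(s, p). s @ p) `
          (factors_of_length (star_prod [w]) j \<times> factors_of_length (star_prod ws) (N - j)))"
proof
  fix f assume "f \<in> factors_of_length (star_prod (w # ws)) N"
  then obtain a b n v where f: "length f = N" "a @ f @ b = concat (replicate n w) @ v"
    and v: "v \<in> star_prod ws"
    by (auto simp: factors_of_length_def)
  obtain s p where "f = s @ p" and s: "\<exists>a' b'. a' @ s @ b' = concat (replicate n w)"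
    and p: "\<exists>a' b'. a' @ p @ b' = v"
    using factor_of_append[OF f(2)] by blast
  moreover have "s \<in> factors_of_length (star_prod [w]) (length s)"
    using s Nil_in_star_prod[of "[]"] by (force simp: factors_of_length_def)
  moreover have "p \<in> factors_of_length (star_prod ws) (N - length s)"
    using p v f(1) \<open>f = s @ p\<close> by (force simp: factors_of_length_def)
  ultimately show "f \<in> (\<Union>j\<le>N. (\<lambda>(s, p). s @ p) `
          (factors_of_length (star_prod [w]) j \<times> factors_of_length (star_prod ws) (N - j)))"
    using f(1) by force
qed

lemma card_factors_of_length_power:
  "finite (factors_of_length (star_prod [w]) N) \<and> card (factors_of_length (star_prod [w]) N) \<le> Suc (length w)"
proof -
  let ?R = "(\<lambda>r. map (\<lambda>j. w ! ((r + j) mod length w)) [0..<N]) ` {..<length w}"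
  have "card ?R \<le> length w" using card_image_le[of "{..<length w}"] by simp
  then have "card (insert [] ?R) \<le> Suc (length w)" by (auto simp: card_insert_if)
  moreover have "finite (insert [] ?R)" by simp
  ultimately show ?thesis
    using factors_of_length_power[of w N] by (meson card_mono finite_subset order_trans)
qed

lemma card_factors_of_length_star_prod:
  "\<exists>K. \<forall>N. finite (factors_of_length (star_prod ws) N)
           \<and> card (factors_of_length (star_prod ws) N) \<le> K * Suc N ^ length ws"
proof (induction ws)
  case Nil
  have sub: "factors_of_length (star_prod ([] :: 'a list list)) N \<subseteq> {[]}" for N
    by (auto simp: factors_of_length_def)
  show ?case
    using finite_subset[OF sub] card_mono[OF _ sub] by (intro exI[of _ 1]) simp
next
  case (Cons w ws)
  then obtain K where K: "\<And>N. finite (factors_of_length (star_prod ws) N)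
      \<and> card (factors_of_length (star_prod ws) N) \<le> K * Suc N ^ length ws"
    by blast
  let ?pieces = "\<lambda>N j. (\<lambda>(s, p). s @ p) `
     (factors_of_length (star_prod [w]) j \<times> factors_of_length (star_prod ws) (N - j))"
  have piece: "finite (?pieces N j) \<and> card (?pieces N j) \<le> Suc (length w) * (K * Suc N ^ length ws)"
    for N j
  proof -
    have fin: "finite (factors_of_length (star_prod [w]) j \<times> factors_of_length (star_prod ws) (N - j))"
      using card_factors_of_length_power K by blast
    have "card (?pieces N j)
        \<le> card (factors_of_length (star_prod [w]) j) * card (factors_of_length (star_prod ws) (N - j))"
      using card_image_le[OF fin] by (simp only: card_cartesian_product)
    also have "\<dots> \<le> Suc (length w) * (K * Suc (N - j) ^ length ws)"
      using card_factors_of_length_power[of w j] K[of "N - j"] by (meson mult_le_mono)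
    also have "\<dots> \<le> Suc (length w) * (K * Suc N ^ length ws)"
      by (intro mult_le_mono2 power_mono) auto
    finally show ?thesis using fin by blast
  qed
  have "finite (factors_of_length (star_prod (w # ws)) N)
      \<and> card (factors_of_length (star_prod (w # ws)) N) \<le> (Suc (length w) * K) * Suc N ^ length (w # ws)"
    for N
  proof -
    have fin: "finite (\<Union>j\<le>N. ?pieces N j)" using piece by blast
    have "card (factors_of_length (star_prod (w # ws)) N) \<le> card (\<Union>j\<le>N. ?pieces N j)"
      using factors_of_length_star_prod_Cons by (rule card_mono[OF fin])
    also have "\<dots> \<le> (\<Sum>j\<le>N. card (?pieces N j))" by (rule card_UN_le) simp
    also have "\<dots> \<le> (\<Sum>j\<le>N. Suc (length w) * (K * Suc N ^ length ws))"
      using piece by (intro sum_mono) blast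
    also have "\<dots> = (Suc (length w) * K) * Suc N ^ length (w # ws)" by (simp add: algebra_simps)
    finally show ?thesis
      using finite_subset[OF factors_of_length_star_prod_Cons fin] by blast
  qed
  then show ?case by blast
qed

lemma exp_dominates_poly: "\<exists>k::nat. K * Suc (k * L) ^ M < 2 ^ k"
proof -
  define D where "D = Suc (L * Suc M)"
  define s where "s = Suc (K * D ^ M)"
  define k where "k = Suc M * s"
  have "Suc (k * L) \<le> D * s"
  proof -
    have "Suc (k * L) = 1 + L * Suc M * s" by (simp only: k_def ac_simps)
    also have "\<dots> \<le> s + L * Suc M * s" using s_def by simp
    also have "\<dots> = D * s" unfolding D_def by simp
    finally show ?thesis .
  qed
  then have "K * Suc (k * L) ^ M \<le> K * (D * s) ^ M"
    by (intro mult_le_mono2 power_mono) auto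
  also have "\<dots> = (K * D ^ M) * s ^ M" by (simp add: power_mult_distrib)
  also have "\<dots> < s * s ^ M" using s_def by simp
  also have "\<dots> < (2 ^ s) ^ Suc M"
    by (metis power_Suc less_exp power_strict_mono zero_less_Suc zero_le)
  also have "\<dots> = 2 ^ k" unfolding k_def by (metis power_mult mult.commute)
  finally show ?thesis by blast
qed

lemma concat_two_blocks_inj:
  assumes "x \<noteq> y" "length x = length y"
  shows "inj_on (\<lambda>bs. concat (map (\<lambda>b. if b then x else y) bs)) {bs. length bs = k}"
proof -
  have "bs = bs'" if "length bs = length bs'"
      "concat (map (\<lambda>b. if b then x else y) bs) = concat (map (\<lambda>b. if b then x else y) bs')" for bs bs'
    using that
  proof (induction bs arbitrary: bs')
    case (Cons b bs)
    then obtain b' bs'' where bs': "bs' = b' # bs''" by (cases bs') auto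
    let ?f = "\<lambda>b. if b then x else y"
    have "?f b = ?f b' \<and> concat (map ?f bs) = concat (map ?f bs'')"
      using Cons.prems assms(2) unfolding bs' by (intro append_eq_append_conv[THEN iffD1]) auto
    then show ?case using Cons.IH Cons.prems assms(1) unfolding bs' by (cases b; cases b') auto
  qed simp
  then show ?thesis by (auto intro: inj_onI)
qed

text \<open>A bounded language has polynomially many factors of each length, whereas the words
  over two non-commuting words \<open>u\<close>, \<open>v\<close> contain exponentially many: the blocks \<open>uv\<close> and \<open>vu\<close>
  code every bit string.\<close>
lemma bounded_lang_factors_commute:
  assumes "bounded_lang L" and factors: "\<forall>w\<in>kstar {u, v}. \<exists>a b. a @ w @ b \<in> L"
  shows "u @ v = v @ u"
proof (rule ccontr)
  assume noncomm: "u @ v \<noteq> v @ u"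
  obtain ws where "L \<subseteq> star_prod ws" using assms(1) by (auto simp: bounded_lang_def)
  obtain K where K: "\<And>N. finite (factors_of_length (star_prod ws) N)
      \<and> card (factors_of_length (star_prod ws) N) \<le> K * Suc N ^ length ws"
    using card_factors_of_length_star_prod by blast
  define l where "l = length (u @ v)"
  obtain k where k: "K * Suc (k * l) ^ length ws < 2 ^ k" using exp_dominates_poly by blast
  define code where "code bs = concat (map (\<lambda>b. if b then u @ v else v @ u) bs)" for bs
  have length_code: "length (code bs) = length bs * l" for bs
    by (induction bs) (auto simp: code_def l_def)
  have blocks: "u @ v \<in> kstar {u, v}" "v @ u \<in> kstar {u, v}"
    by (simp_all add: kstar_append kstar_singleton)
  have "code ` {bs. length bs = k} \<subseteq> factors_of_length (star_prod ws) (k * l)"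
  proof
    fix f assume "f \<in> code ` {bs. length bs = k}"
    then obtain bs where bs: "length bs = k" "f = code bs" by auto
    have "length f = k * l" using bs length_code by simp
    moreover have "f \<in> kstar {u, v}"
      unfolding bs code_def using blocks by (intro kstar_concat) auto
    ultimately show "f \<in> factors_of_length (star_prod ws) (k * l)"
      using factors \<open>L \<subseteq> star_prod ws\<close> by (fastforce simp: factors_of_length_def)
  qed
  then have "card (code ` {bs. length bs = k}) \<le> K * Suc (k * l) ^ length ws"
    using K by (meson card_mono order_trans)
  moreover have "card (code ` {bs. length bs = k}) = card {bs :: bool list. length bs = k}"
    using concat_two_blocks_inj[OF noncomm, of k] unfolding code_def by (intro card_image) simp
  moreover have "card {bs :: bool list. length bs = k} = 2 ^ k"
    using card_lists_length_eq[of "UNIV :: bool set" k] by simp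
  ultimately have "2 ^ k \<le> K * Suc (k * l) ^ length ws" by metis
  with k show False by (meson leD)
qed

section \<open>Blocks of words over the flat alphabet\<close>

fun is_FQ :: "('a, 'q) fsym \<Rightarrow> bool" where
  "is_FQ (FQ _) = True"
| "is_FQ _ = False"

abbreviation state_prefix :: "('a, 'q) fsym list \<Rightarrow> ('a, 'q) fsym list" where
  "state_prefix w \<equiv> takeWhile is_FQ w"

definition skeleton :: "('a, 'q) fsym list \<Rightarrow> ('a, 'q) fsym list" where
  "skeleton w = filter (\<lambda>s. \<not> is_FQ s) w"

fun head_state :: "('a, 'q) fsym list \<Rightarrow> 'q option" where
  "head_state (FQ q # _) = Some q"
| "head_state _ = None"

definition proper_block :: "('a, 'q) fsym list \<Rightarrow> bool" where
  "proper_block b \<longleftrightarrow> b \<noteq> [] \<and> \<not> is_FQ (hd b) \<and> list_all is_FQ (tl b)"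

function blocks_from :: "('a, 'q) fsym list \<Rightarrow> ('a, 'q) fsym list list" where
  "blocks_from [] = []"
| "blocks_from (c # w) = (c # takeWhile is_FQ w) # blocks_from (dropWhile is_FQ w)"
  by pat_completeness auto
termination
  by (relation "measure length") (auto simp: le_imp_less_Suc length_dropWhile_le)

text \<open>\<open>w = state_prefix w @ concat (blocks w)\<close> extends the factorization \<open>s\<^sub>0 s\<^sub>1 \<cdots> s\<^sub>m\<close> of
  \<open>AllFlat\<close> to all words: a block is a letter other than a state followed by the maximal run
  of states behind it.\<close>
definition blocks :: "('a, 'q) fsym list \<Rightarrow> ('a, 'q) fsym list list" where
  "blocks w = blocks_from (dropWhile is_FQ w)"

lemma skeleton_Nil [simp]: "skeleton [] = []"
  and skeleton_Cons [simp]: "skeleton (a # w) = (if is_FQ a then skeleton w else a # skeleton w)"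
  by (simp_all add: skeleton_def)

lemma skeleton_append [simp]: "skeleton (u @ v) = skeleton u @ skeleton v"
  by (simp add: skeleton_def)

lemma skeleton_concat_map:
  "(\<And>w. w \<in> set ws \<Longrightarrow> skeleton w = skeleton (f w)) \<Longrightarrow> skeleton (concat ws) = skeleton (concat (map f ws))"
  by (induction ws) auto

lemma skeleton_eq_Nil_iff: "skeleton w = [] \<longleftrightarrow> list_all is_FQ w"
  by (auto simp: skeleton_def filter_empty_conv list_all_iff)

lemma concat_blocks_from: "concat (blocks_from w) = w"
  by (induction w rule: blocks_from.induct) auto

lemma state_prefix_concat_blocks: "state_prefix w @ concat (blocks w) = w"
  by (simp add: blocks_def concat_blocks_from)

lemma list_all_state_prefix: "list_all is_FQ (state_prefix w)"
  by (auto simp: list_all_iff dest: set_takeWhileD)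

lemma skeleton_state_prefix [simp]: "skeleton (state_prefix w) = []"
  by (simp add: skeleton_eq_Nil_iff list_all_state_prefix)

lemma proper_block_blocks_from:
  "w = [] \<or> \<not> is_FQ (hd w) \<Longrightarrow> b \<in> set (blocks_from w) \<Longrightarrow> proper_block b"
proof (induction w rule: blocks_from.induct)
  case (2 c w)
  from "2.prems"(2) consider "b = c # state_prefix w" | "b \<in> set (blocks_from (dropWhile is_FQ w))"
    by auto
  then show ?case
  proof cases
    case 1
    with "2.prems"(1) show ?thesis by (simp add: proper_block_def list_all_state_prefix)
  next
    case 2
    with "2.IH" hd_dropWhile show ?thesis by blast
  qed
qed simp

lemma proper_block_blocks: "b \<in> set (blocks w) \<Longrightarrow> proper_block b"
  using proper_block_blocks_from[of "dropWhile is_FQ w" b] hd_dropWhile[of is_FQ w]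
  unfolding blocks_def by blast

lemma proper_block_append_states:
  "proper_block b \<Longrightarrow> list_all is_FQ s \<Longrightarrow> proper_block (b @ s)"
  by (auto simp: proper_block_def)

lemma blocks_from_concat:
  "\<forall>b\<in>set bs. proper_block b \<Longrightarrow> blocks_from (concat bs) = bs
     \<and> state_prefix (concat bs) = [] \<and> dropWhile is_FQ (concat bs) = concat bs"
proof (induction bs)
  case (Cons b bs)
  then obtain c r where "b = c # r" "\<not> is_FQ c" "list_all is_FQ r"
    by (cases b) (auto simp: proper_block_def)
  with Cons show ?case
    by (simp add: list_all_iff)
qed simp

lemma blocks_unique:
  assumes "list_all is_FQ s" "\<forall>b\<in>set bs. proper_block b"
  shows "state_prefix (s @ concat bs) = s" "blocks (s @ concat bs) = bs"
  using assms blocks_from_concat[OF assms(2)]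
  by (simp_all add: blocks_def list_all_iff)

lemma skeleton_concat_proper:
  "\<forall>b\<in>set bs. proper_block b \<Longrightarrow> skeleton (concat bs) = map hd bs"
proof (induction bs)
  case (Cons b bs)
  then show ?case
    by (cases b) (auto simp: proper_block_def skeleton_def list_all_iff filter_empty_conv)
qed (simp add: skeleton_def)

lemma skeleton_eq_map_hd_blocks: "skeleton w = map hd (blocks w)"
proof -
  have "skeleton (state_prefix w @ concat (blocks w)) = skeleton w"
    by (rule arg_cong[OF state_prefix_concat_blocks])
  moreover have "skeleton (concat (blocks w)) = map hd (blocks w)"
    using proper_block_blocks by (intro skeleton_concat_proper) blast
  ultimately show ?thesis by simp
qed

lemma blocks_eq_Nil_iff: "blocks w = [] \<longleftrightarrow> list_all is_FQ w"
  using skeleton_eq_map_hd_blocks[of w] by (simp add: skeleton_eq_Nil_iff[symmetric])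

lemma blocks_append_nonempty:
  assumes "blocks a \<noteq> []"
  shows "blocks (a @ b) = butlast (blocks a) @ [last (blocks a) @ state_prefix b] @ blocks b"
proof -
  obtain bs l where a: "blocks a = bs @ [l]" using assms by (cases "blocks a" rule: rev_exhaust) auto
  let ?bs = "bs @ [l @ state_prefix b] @ blocks b"
  have "a = state_prefix a @ concat bs @ l" "b = state_prefix b @ concat (blocks b)"
    using state_prefix_concat_blocks[of a] state_prefix_concat_blocks[of b] a by simp_all
  then have "a @ b = (state_prefix a @ concat bs @ l) @ (state_prefix b @ concat (blocks b))"
    by (rule arg_cong2)
  then have eq: "a @ b = state_prefix a @ concat ?bs" by simp
  have "\<forall>b'\<in>set ?bs. proper_block b'"
    using proper_block_blocks[of _ a] proper_block_blocks[of _ b] list_all_state_prefix a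
    by (auto intro: proper_block_append_states)
  then have "blocks (state_prefix a @ concat ?bs) = ?bs"
    by (rule blocks_unique(2)[OF list_all_state_prefix])
  then show ?thesis unfolding eq[symmetric] using a by simp
qed

lemma blocks_append:
  "\<exists>bs. blocks (a @ b) = bs @ blocks b \<and> state_prefix (a @ b) @ concat bs = a @ state_prefix b"
proof (cases "blocks a = []")
  case True
  then have "list_all is_FQ a" by (simp add: blocks_eq_Nil_iff)
  then show ?thesis
    by (intro exI[of _ "[]"]) (simp add: blocks_def list_all_iff)
next
  case False
  then obtain bs l where a: "blocks a = bs @ [l]" by (cases "blocks a" rule: rev_exhaust) auto
  have "state_prefix (a @ b) = state_prefix a"
    using False by (auto simp: blocks_eq_Nil_iff list_all_iff intro: takeWhile_append1)
  moreover have "a = state_prefix a @ concat bs @ l"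
    using state_prefix_concat_blocks[of a] a by simp
  then have "a @ state_prefix b = (state_prefix a @ concat bs @ l) @ state_prefix b"
    by (rule arg_cong)
  then have "state_prefix a @ concat (bs @ [l @ state_prefix b]) = a @ state_prefix b" by simp
  ultimately show ?thesis
    using blocks_append_nonempty[OF False] a by (intro exI[of _ "bs @ [l @ state_prefix b]"]) simp
qed

definition same_shape :: "('a, 'q) fsym list \<Rightarrow> ('a, 'q) fsym list \<Rightarrow> bool" where
  "same_shape u v \<longleftrightarrow> length u = length v \<and> take 1 u = take 1 v \<and> skeleton u = skeleton v"

lemma same_shape_Nil [simp]: "same_shape [] []"
  by (simp add: same_shape_def)

lemma same_shape_append:
  "same_shape u u' \<Longrightarrow> same_shape v v' \<Longrightarrow> same_shape (u @ v) (u' @ v')"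
  by (cases "length u'") (auto simp: same_shape_def)

lemma same_shape_states:
  assumes "list_all is_FQ u" "list_all is_FQ v" "length u = length v" "u \<noteq> [] \<Longrightarrow> hd u = hd v"
  shows "same_shape u v"
proof -
  have "take 1 u = take 1 v" using assms(3,4) by (cases u; cases v) auto
  with assms(1-3) show ?thesis by (simp add: same_shape_def skeleton_eq_Nil_iff[THEN iffD2])
qed

lemma head_state_take_1: "head_state (take 1 w) = head_state w"
  by (cases w rule: head_state.cases) auto

lemma same_shape_head_state: "same_shape u v \<Longrightarrow> head_state u = head_state v"
  by (metis head_state_take_1 same_shape_def)

lemma head_state_append: "u \<noteq> [] \<Longrightarrow> head_state (u @ v) = head_state u"
  by (cases u rule: head_state.cases) auto

section \<open>Flat words\<close>

lemma qwords_iff: "x \<in> qwords \<longleftrightarrow> list_all is_FQ x"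
proof
  assume "list_all is_FQ x"
  then have "x = map FQ (map unFQ x)"
    by (induction x) (auto elim: is_FQ.elims)
  then show "x \<in> qwords" unfolding qwords_def by blast
qed (auto simp: qwords_def list_all_iff)

lemma proper_block_flat_factor: "b \<in> flat_factor A \<Longrightarrow> proper_block b"
  by (auto simp: flat_factor_def calls_f_def proper_block_def qwords_iff)

lemma is_fact_eq:
  assumes "is_fact A w f"
  shows "f = (state_prefix w, blocks w)"
proof (cases f)
  case (Pair s bs)
  with assms have "w = s @ concat bs" "list_all is_FQ s" "\<forall>b\<in>set bs. proper_block b"
    using proper_block_flat_factor by (auto simp: is_fact_def qwords_iff)
  with Pair show ?thesis using blocks_unique[of s bs] by simp
qed

lemma AllFlat_iff: "w \<in> AllFlat A \<longleftrightarrow> set (blocks w) \<subseteq> flat_factor A"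
proof
  assume "w \<in> AllFlat A"
  then obtain f where "is_fact A w f" by (auto simp: AllFlat_def)
  with is_fact_eq[OF this] show "set (blocks w) \<subseteq> flat_factor A" by (simp add: is_fact_def)
next
  assume "set (blocks w) \<subseteq> flat_factor A"
  then have "is_fact A w (state_prefix w, blocks w)"
    by (simp add: is_fact_def qwords_iff list_all_state_prefix state_prefix_concat_blocks)
  then show "w \<in> AllFlat A" by (auto simp: AllFlat_def)
qed

lemma conc_kstar_blocks:
  assumes "w \<in> conc P (kstar F)" "\<forall>s\<in>P. list_all is_FQ s" "\<forall>b\<in>F. proper_block b"
  shows "state_prefix w \<in> P" "set (blocks w) \<subseteq> F"
proof -
  obtain s bs where w: "w = s @ concat bs" and "s \<in> P" "set bs \<subseteq> F"
    using assms(1) by (auto simp: conc_def kstar_iff)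
  moreover have "list_all is_FQ s" "\<forall>b\<in>set bs. proper_block b"
    using assms(2,3) \<open>s \<in> P\<close> \<open>set bs \<subseteq> F\<close> by auto
  ultimately show "state_prefix w \<in> P" "set (blocks w) \<subseteq> F"
    using blocks_unique[of s bs] by simp_all
qed

lemma head_state_eq: "head_state w = (if state_prefix w = [] then None else Some (unFQ (hd (state_prefix w))))"
  by (cases w rule: head_state.cases) auto

lemma tf_step_Cons: "tf_step A c (s # r) = tf_step A c [s]"
  by (cases s) auto

lemma tf_step_hd: "b \<noteq> [] \<Longrightarrow> tf_step A c b = tf_step A c [hd b]"
  using tf_step_Cons[of A c "hd b" "tl b"] by simp

lemma foldl_tf_step:
  "\<forall>b\<in>set bs. b \<noteq> [] \<Longrightarrow> foldl (tf_step A) c bs = foldl (\<lambda>c s. tf_step A c [s]) c (map hd bs)"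
proof (induction bs arbitrary: c)
  case (Cons b bs)
  then show ?case using tf_step_hd[of b A c] by simp
qed simp

lemma tf_eq_skeleton:
  assumes "w \<in> AllFlat A"
  shows "tf A w = foldl (\<lambda>c s. tf_step A c [s])
           (case head_state w of None \<Rightarrow> init_conf A | Some q \<Rightarrow> ([bot A], q)) (skeleton w)"
proof -
  obtain f where f: "is_fact A w f" using assms by (auto simp: AllFlat_def)
  with is_fact_eq[OF f] have "is_fact A w (state_prefix w, blocks w)" by simp
  then have "(THE f. is_fact A w f) = (state_prefix w, blocks w)"
    by (rule the_equality) (rule is_fact_eq)
  then have "tf A w = foldl (tf_step A)
      (if state_prefix w = [] then init_conf A else ([bot A], unFQ (hd (state_prefix w)))) (blocks w)"
    by (simp add: tf_def tf_fact_def)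
  also have "\<dots> = foldl (\<lambda>c s. tf_step A c [s])
      (if state_prefix w = [] then init_conf A else ([bot A], unFQ (hd (state_prefix w)))) (map hd (blocks w))"
    using proper_block_blocks[of _ w] by (intro foldl_tf_step) (auto simp: proper_block_def)
  finally show ?thesis by (simp add: head_state_eq skeleton_eq_map_hd_blocks)
qed

lemma nu_f_cong:
  assumes "w \<in> AllFlat A" "w' \<in> AllFlat A"
    and "head_state w = head_state w'" "skeleton w = skeleton w'"
  shows "nu_f A w = nu_f A w'"
  using assms by (simp add: nu_f_def tf_eq_skeleton)

lemma Desc_append: "d \<in> Desc A \<Longrightarrow> d' \<in> Desc A \<Longrightarrow> d @ d' \<in> Desc A"
  by (induction rule: Desc.induct) (auto intro: Desc.intros)

lemma WM_in_Desc: "w \<in> WM A \<Longrightarrow> w \<in> Desc A"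
  using Desc.desc_wm[OF _ Desc.desc_eps] by fastforce

lemma drop_WM_in_Desc: "w \<in> WM A \<Longrightarrow> drop i w \<in> Desc A"
proof (induction arbitrary: i rule: WM.induct)
  case (wm_int c)
  then show ?case by (cases i) (auto intro: Desc.intros WM_in_Desc WM.wm_int)
next
  case (wm_cat u v)
  then show ?case by (auto intro: Desc_append)
next
  case (wm_nest a b w)
  have "drop j [b] \<in> Desc A" for j
    using wm_nest(2) by (cases j) (auto intro: Desc.intros)
  with wm_nest show ?case
    by (cases i) (auto intro: WM_in_Desc WM.wm_nest Desc_append)
qed (simp add: Desc.desc_eps)

lemma sigma0_drop: "sigma0 A (drop i w) = drop i (sigma0 A w)"
  by (rule nth_equalityI) (auto simp: sigma0_def add.commute)

lemma Nil_in_S0: "[] \<in> S0 A"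
  using Desc.desc_eps by (force simp: S0_def sigma0_def)

lemma S0_states: "s \<in> S0 A \<Longrightarrow> list_all is_FQ s"
  by (auto simp: S0_def list_all_iff)

lemma lquot_S1_eq: "x \<in> lquot \<tau> (S1 A) \<Longrightarrow> \<exists>w\<in>WM A. x = map FQ (tl (sigma0 A w))"
  by (auto simp: lquot_def S1_def sigma1_def)

lemma lquot_S1_states: "x \<in> lquot \<tau> (S1 A) \<Longrightarrow> list_all is_FQ x"
  by (auto simp: list_all_iff dest!: lquot_S1_eq)

text \<open>A suffix of \<open>\<sigma>\<^sub>1(w)\<close> without its first letter is \<open>\<sigma>\<^sub>0\<close> of a suffix of the well-matched
  word \<open>w\<close>, and suffixes of well-matched words are descending.\<close>
lemma lquot_S1_suffix_in_S0:
  assumes "y @ s \<in> lquot \<tau> (S1 A)"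
  shows "s \<in> S0 A"
proof -
  obtain w where "w \<in> WM A" "y @ s = map FQ (tl (sigma0 A w))"
    using lquot_S1_eq[OF assms] by blast
  then have "s = map FQ (sigma0 A (drop (Suc (length y)) w))"
    by (metis append_eq_conv_conj drop_map drop_Suc sigma0_drop)
  then show ?thesis
    using drop_WM_in_Desc[OF \<open>w \<in> WM A\<close>] by (auto simp: S0_def)
qed

lemma proper_block_S1: "x \<in> S1 A \<Longrightarrow> proper_block x"
  by (auto simp: S1_def sigma1_def proper_block_def list_all_iff)

lemma proper_block_calls_f: "x \<in> calls_f A \<Longrightarrow> proper_block x"
  by (auto simp: calls_f_def proper_block_def)

lemma Flat_subset_AllFlat: "Flat A \<subseteq> AllFlat A"
proof
  fix w assume "w \<in> Flat A"
  then have "set (blocks w) \<subseteq> calls_f A \<union> S1 A"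
    using conc_kstar_blocks(2)[of w] S0_states proper_block_S1 proper_block_calls_f
    unfolding Flat_def by blast
  moreover have "calls_f A \<union> S1 A \<subseteq> flat_factor A"
    by (auto simp: flat_factor_def S1_def sigma1_def qwords_def)
  ultimately show "w \<in> AllFlat A" unfolding AllFlat_iff by blast
qed

lemma Flat_append_kstar: "W \<in> Flat A \<Longrightarrow> w \<in> kstar (calls_f A \<union> S1 A) \<Longrightarrow> W @ w \<in> Flat A"
  unfolding Flat_def conc_def by (fastforce intro: kstar_append)

section \<open>Linear fooling schemes\<close>

lemma fool_setI: "s \<in> {u2, v2} \<Longrightarrow> w \<in> kstar {u, v} \<Longrightarrow> z \<in> Z \<Longrightarrow> s @ w @ z \<in> fool_set u2 v2 u v Z"
  unfolding fool_set_def conc_def by blast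

lemma fool_setE:
  assumes "w \<in> fool_set u2 v2 u v Z"
  obtains s ws z where "w = s @ concat ws @ z" "s \<in> {u2, v2}" "set ws \<subseteq> {u, v}" "z \<in> Z"
  using assms unfolding fool_set_def conc_def kstar_iff by blast

lemma linear_fooling_scheme_neq:
  assumes "linear_fooling_scheme t u2 v2 u v Z"
  shows "u2 \<noteq> v2"
proof -
  have "[] \<in> upto_pow u v 0" by (auto simp: upto_pow_def intro: exI[of _ "[]"])
  then show ?thesis using assms unfolding linear_fooling_scheme_def by fastforce
qed

lemma linear_fooling_scheme_not_commute:
  assumes "linear_fooling_scheme t u2 v2 u v Z"
  shows "u @ v \<noteq> v @ u"
proof
  assume comm: "u @ v = v @ u"
  obtain x y where "u = x @ u2" "v = y @ v2" "length u2 = length v2"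
    using assms unfolding linear_fooling_scheme_def by blast
  with comm have "(v @ x) @ u2 = (u @ y) @ v2" by simp
  with \<open>length u2 = length v2\<close> have "u2 = v2"
    using append_eq_append_conv[of "v @ x" "u @ y" u2 v2] by auto
  with linear_fooling_scheme_neq[OF assms] show False by simp
qed

lemma bigo_linear_compose_mult:
  fixes f :: "nat \<Rightarrow> nat"
  assumes "(\<lambda>n. real (f n)) \<in> O(\<lambda>n. real n)" "0 < m"
  shows "(\<lambda>n. real (f (m * n))) \<in> O(\<lambda>n. real n)"
proof -
  have "(\<lambda>n. real (f (m * n))) \<in> O(\<lambda>n. real (m * n))"
    using landau_o.big.compose[OF assms(1) mult_nat_left_at_top[OF assms(2)]] .
  also have "(\<lambda>n. real (m * n)) \<in> O(\<lambda>n. real n)"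
    by (intro bigoI[of _ "real m"]) simp
  finally show ?thesis .
qed

text \<open>The new tail for \<open>n\<close> is \<open>g (z (m * n))\<close>: a product of \<open>n\<close> words \<open>U, V\<close> stands for a
  product of at most \<open>m * n\<close> words \<open>u, v\<close>.\<close>
lemma linear_fooling_scheme_transfer:
  assumes scheme: "linear_fooling_scheme t u2 v2 u v Z"
    and suffixes: "\<exists>x. U = x @ U2" "\<exists>y. V = y @ V2" "length U2 = length V2"
    and bk: "bk U \<in> upto_pow u v m" "bk V \<in> upto_pow u v m" "0 < m"
    and shorter: "\<And>zz. zz \<in> Z \<Longrightarrow> length (g zz) \<le> length zz"
    and same_values: "\<And>ws zz. set ws \<subseteq> {U, V} \<Longrightarrow> zz \<in> Z \<Longrightarrow>
        t (U2 @ concat ws @ g zz) = t (u2 @ concat (map bk ws) @ zz) \<and>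
        t (V2 @ concat ws @ g zz) = t (v2 @ concat (map bk ws) @ zz)"
  shows "linear_fooling_scheme t U2 V2 U V (g ` Z)"
proof -
  obtain z where zZ: "\<And>n. z n \<in> Z" and zO: "(\<lambda>n. real (length (z n))) \<in> O(\<lambda>n. real n)"
    and dist: "\<And>n w. w \<in> upto_pow u v n \<Longrightarrow> t (u2 @ w @ z n) \<noteq> t (v2 @ w @ z n)"
    and dom: "fool_set u2 v2 u v Z \<subseteq> {w. t w \<noteq> None}"
    using scheme unfolding linear_fooling_scheme_def by blast
  have bk_upto: "concat (map bk ws) \<in> upto_pow u v (m * length ws)" if "set ws \<subseteq> {U, V}" for ws
    using upto_pow_concat[of "map bk ws" u v m] that bk by auto
  have "fool_set U2 V2 U V (g ` Z) \<subseteq> {w. t w \<noteq> None}"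
  proof
    fix w assume "w \<in> fool_set U2 V2 U V (g ` Z)"
    then obtain s ws zz where w: "w = s @ concat ws @ g zz" "s \<in> {U2, V2}" "set ws \<subseteq> {U, V}" "zz \<in> Z"
      by (auto elim: fool_setE)
    have "concat (map bk ws) \<in> kstar {u, v}"
      using bk_upto[OF w(3)] upto_pow_kstar by blast
    then have "s' @ concat (map bk ws) @ zz \<in> fool_set u2 v2 u v Z" if "s' \<in> {u2, v2}" for s'
      using that w(4) by (intro fool_setI)
    then have "t (s' @ concat (map bk ws) @ zz) \<noteq> None" if "s' \<in> {u2, v2}" for s'
      using dom that by blast
    with same_values[OF w(3,4)] w show "w \<in> {w. t w \<noteq> None}" by auto
  qed
  moreover have "(\<lambda>n. real (length (g (z (m * n))))) \<in> O(\<lambda>n. real n)"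
  proof -
    have "(\<lambda>n. real (length (g (z (m * n))))) \<in> O(\<lambda>n. real (length (z (m * n))))"
      using shorter zZ by (intro landau_o.big_mono) simp
    also have "(\<lambda>n. real (length (z (m * n)))) \<in> O(\<lambda>n. real n)"
      using zO bk(3) by (rule bigo_linear_compose_mult)
    finally show ?thesis .
  qed
  moreover have "t (U2 @ w @ g (z (m * n))) \<noteq> t (V2 @ w @ g (z (m * n)))"
    if w: "w \<in> upto_pow U V n" for n w
  proof -
    obtain ws where ws: "w = concat ws" "set ws \<subseteq> {U, V}" "length ws \<le> n"
      using w by (auto simp: upto_pow_def)
    have "concat (map bk ws) \<in> upto_pow u v (m * n)"
      using bk_upto[OF ws(2)] upto_pow_mono[of "m * length ws" "m * n"] ws(3) by auto
    with dist same_values[OF ws(2) zZ] ws(1) show ?thesis by metis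
  qed
  ultimately show ?thesis
    using suffixes zZ unfolding linear_fooling_scheme_def
    by (intro conjI exI[of _ "\<lambda>n. g (z (m * n))"]) auto
qed

section \<open>From \<open>RegFlat\<close> to \<open>Flat\<close>\<close>

lemma Psi_subset_letters:
  assumes "Psi R \<subseteq> Psi K" "y \<in> R" "a \<in> set y"
  shows "\<exists>x\<in>K. a \<in> set x"
proof -
  obtain i where "i < length y" "y ! i = a" using assms(3) by (auto simp: in_set_conv_nth)
  then have "(a, length y - i) \<in> Psi K" using assms(1,2) by (auto simp: Psi_def Psi_w_def)
  then show ?thesis by (auto simp: Psi_def Psi_w_def intro: nth_mem)
qed

lemma Psi_subset_suffix:
  assumes "Psi R \<subseteq> Psi K" "r @ l \<in> R" "l \<noteq> []"
  shows "\<exists>y s. y @ s \<in> K \<and> length s = length l \<and> hd s = hd l"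
proof -
  have "(hd l, length l) \<in> Psi_w (r @ l)"
    using assms(3) unfolding Psi_w_def
    by (intro CollectI exI[of _ "length r"]) (simp add: nth_append hd_conv_nth)
  then have "(hd l, length l) \<in> Psi K"
    using assms(1,2) unfolding Psi_def by blast
  then obtain x j where "x \<in> K" "j < length x" "x ! j = hd l" "length x - j = length l"
    unfolding Psi_def Psi_w_def by auto
  then show ?thesis
    by (intro exI[of _ "take j x"] exI[of _ "drop j x"]) (auto simp: hd_drop_conv_nth)
qed

abbreviation RegFlat_factors ::
  "('a, 'q, 'g) vpa \<Rightarrow> (('q \<Rightarrow> 'q) \<Rightarrow> ('a, 'q) fsym list set) \<Rightarrow> ('a, 'q) fsym list set" where
  "RegFlat_factors A R \<equiv> calls_f A \<union> (\<Union>\<tau>. (\<lambda>x. FT \<tau> # x) ` R \<tau>)"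

locale S1_overapproximation =
  fixes A :: "('a, 'q::{finite,linorder}, 'g::linorder) vpa"
    and R :: "('q \<Rightarrow> 'q) \<Rightarrow> ('a, 'q) fsym list set"
  assumes overapprox: "\<And>\<tau>. bounded_overapprox (lquot \<tau> (S1 A)) (R \<tau>)"
begin

lemma R_states: "y \<in> R \<tau> \<Longrightarrow> list_all is_FQ y"
  using Psi_subset_letters[of "R \<tau>" "lquot \<tau> (S1 A)" y] overapprox[of \<tau>] lquot_S1_states
  by (fastforce simp: bounded_overapprox_def list_all_iff)

lemma R_length: "y \<in> R \<tau> \<Longrightarrow> \<exists>x\<in>lquot \<tau> (S1 A). length x = length y"
  using overapprox[of \<tau>] unfolding bounded_overapprox_def by (metis image_eqI imageE)

lemma R_suffix:
  "r @ l \<in> R \<tau> \<Longrightarrow> l \<noteq> [] \<Longrightarrow> \<exists>y s. y @ s \<in> lquot \<tau> (S1 A) \<and> length s = length l \<and> hd s = hd l"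
  using overapprox[of \<tau>] Psi_subset_suffix[of "R \<tau>" "lquot \<tau> (S1 A)"]
  by (simp add: bounded_overapprox_def)

lemma bounded_lang_UN_R: "bounded_lang (\<Union>\<tau>. R \<tau>)"
  using overapprox by (intro bounded_lang_UN) (auto simp: bounded_overapprox_def)

lemma proper_block_RegFlat_factors: "b \<in> RegFlat_factors A R \<Longrightarrow> proper_block b"
  using R_states by (auto simp: calls_f_def proper_block_def)

lemma RegFlat_blocks:
  assumes "w \<in> RegFlat A R"
  shows "state_prefix w \<in> (\<Union>\<tau>. Suf (R \<tau>))" "set (blocks w) \<subseteq> RegFlat_factors A R"
proof -
  have "w \<in> conc (\<Union>\<tau>. Suf (R \<tau>)) (kstar (RegFlat_factors A R))"
    using assms by (simp add: RegFlat_def)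
  moreover have "\<forall>s\<in>\<Union>\<tau>. Suf (R \<tau>). list_all is_FQ s"
    using R_states by (fastforce simp: Suf_def)
  moreover have "\<forall>b\<in>RegFlat_factors A R. proper_block b"
    using proper_block_RegFlat_factors by blast
  ultimately show "state_prefix w \<in> (\<Union>\<tau>. Suf (R \<tau>))" "set (blocks w) \<subseteq> RegFlat_factors A R"
    by (rule conc_kstar_blocks)+
qed

lemma RegFlat_subset_AllFlat: "RegFlat A R \<subseteq> AllFlat A"
proof
  fix w assume "w \<in> RegFlat A R"
  moreover have "RegFlat_factors A R \<subseteq> flat_factor A"
    using R_states by (auto simp: flat_factor_def qwords_iff)
  ultimately show "w \<in> AllFlat A" using RegFlat_blocks(2)[of w] unfolding AllFlat_iff by blast
qed

text \<open>The run of states behind \<open>FT \<tau>\<close> is traded for a word of \<open>\<tau>\<^sup>-\<^sup>1S\<^sub>1\<close> of the same length,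
  which exists by \<open>R_length\<close>.\<close>
definition flat_block :: "('a, 'q) fsym list \<Rightarrow> ('a, 'q) fsym list" where
  "flat_block b = (case b of
      FT \<tau> # y \<Rightarrow> FT \<tau> # (SOME x. x \<in> lquot \<tau> (S1 A) \<and> length x = length y)
    | _ \<Rightarrow> b)"

lemma flat_block:
  assumes "b \<in> RegFlat_factors A R"
  shows "flat_block b \<in> calls_f A \<union> S1 A" "same_shape (flat_block b) b"
proof -
  consider (call) a where "b = [FC a]" "[FC a] \<in> calls_f A"
    | (trans) \<tau> y where "b = FT \<tau> # y" "y \<in> R \<tau>"
    using assms by (auto simp: calls_f_def)
  then have "flat_block b \<in> calls_f A \<union> S1 A \<and> same_shape (flat_block b) b"
  proof cases
    case call
    then show ?thesis by (simp add: flat_block_def same_shape_def)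
  next
    case trans
    let ?x = "SOME x. x \<in> lquot \<tau> (S1 A) \<and> length x = length y"
    have x: "?x \<in> lquot \<tau> (S1 A) \<and> length ?x = length y"
      using R_length[OF trans(2)] by (metis (mono_tags, lifting) someI)
    moreover have "skeleton ?x = []" "skeleton y = []"
      using lquot_S1_states[of ?x \<tau> A] x R_states[OF trans(2)] by (simp_all add: skeleton_eq_Nil_iff)
    ultimately have "same_shape (FT \<tau> # ?x) (FT \<tau> # y)"
      by (simp add: same_shape_def)
    with x trans(1) show ?thesis by (simp add: flat_block_def lquot_def)
  qed
  then show "flat_block b \<in> calls_f A \<union> S1 A" "same_shape (flat_block b) b" by simp_all
qed

definition flatten :: "('a, 'q) fsym list list \<Rightarrow> ('a, 'q) fsym list" where
  "flatten bs = concat (map flat_block bs)"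

lemma flatten:
  assumes "set bs \<subseteq> RegFlat_factors A R"
  shows "flatten bs \<in> kstar (calls_f A \<union> S1 A)" "same_shape (flatten bs) (concat bs)"
proof -
  show "flatten bs \<in> kstar (calls_f A \<union> S1 A)"
    unfolding flatten_def
  proof (rule kstar_concat, rule subsetI)
    fix b' assume "b' \<in> set (map flat_block bs)"
    then obtain b where "b \<in> set bs" "b' = flat_block b" by auto
    then have "b' \<in> calls_f A \<union> S1 A" using assms flat_block(1)[of b] by blast
    then show "b' \<in> kstar (calls_f A \<union> S1 A)" by (rule kstar_singleton)
  qed
  show "same_shape (flatten bs) (concat bs)"
    using assms unfolding flatten_def by (induction bs) (auto intro: same_shape_append flat_block(2))
qed

lemma last_block_replacement:
  assumes "set bs \<subseteq> RegFlat_factors A R" "l @ L \<in> RegFlat_factors A R"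
    and "proper_block l" "list_all is_FQ L"
  shows "\<exists>X P. P \<in> S0 A \<and> X @ P \<in> kstar (calls_f A \<union> S1 A)
                \<and> skeleton X = map hd (bs @ [l]) \<and> same_shape P L"
proof (cases "L = []")
  case True
  then have blocks: "set (bs @ [l]) \<subseteq> RegFlat_factors A R" using assms(1,2) by simp
  then have "skeleton (concat (bs @ [l])) = map hd (bs @ [l])"
    using proper_block_RegFlat_factors by (intro skeleton_concat_proper) blast
  then have "skeleton (flatten (bs @ [l])) = map hd (bs @ [l])"
    using flatten(2)[OF blocks] by (simp add: same_shape_def)
  with True flatten(1)[OF blocks] Nil_in_S0 show ?thesis by force
next
  case False
  with assms(3) have "l @ L \<notin> calls_f A"
    by (cases l) (auto simp: calls_f_def proper_block_def)
  with assms(2,3) obtain \<tau> r where l: "l = FT \<tau> # r" and "r @ L \<in> R \<tau>"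
    by (cases l) (auto simp: proper_block_def)
  then obtain y P where yP: "y @ P \<in> lquot \<tau> (S1 A)" "length P = length L" "hd P = hd L"
    using R_suffix False by blast
  have "flatten bs @ [FT \<tau>] @ y @ P \<in> kstar (calls_f A \<union> S1 A)"
    using flatten(1)[OF assms(1)] yP(1) by (auto simp: lquot_def intro: kstar_append kstar_singleton)
  moreover have "skeleton (flatten bs @ [FT \<tau>] @ y) = map hd (bs @ [l])"
  proof -
    have "skeleton (concat bs) = map hd bs"
      using assms(1) proper_block_RegFlat_factors by (intro skeleton_concat_proper) blast
    moreover have "skeleton y = []"
      using lquot_S1_states[OF yP(1)] by (simp add: skeleton_eq_Nil_iff)
    ultimately show ?thesis
      using flatten(2)[OF assms(1)] l by (simp add: same_shape_def)
  qed
  moreover have "same_shape P L"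
    using lquot_S1_suffix_in_S0[OF yP(1)] S0_states assms(4) yP(2,3) by (intro same_shape_states) auto
  ultimately show ?thesis using lquot_S1_suffix_in_S0[OF yP(1)] by (metis append_assoc)
qed

text \<open>The last block of \<open>x\<close> runs into \<open>s z\<close>; its part inside \<open>s z\<close> becomes the word of
  \<open>S\<^sub>0\<close> at the start of \<open>s'\<close> (\<open>last_block_replacement\<close>), and the blocks of \<open>s\<close> are flattened.\<close>
lemma flat_replacement:
  assumes "\<not> list_all is_FQ x" "a @ x @ s @ z \<in> RegFlat A R"
  obtains X s' where "s' \<in> Flat A" "X @ s' \<in> kstar (calls_f A \<union> S1 A)"
    "skeleton X = skeleton x" "same_shape s' (s @ state_prefix z)"
proof -
  let ?L = "state_prefix (s @ z)"
  obtain bs l where x: "blocks x = bs @ [l]"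
    using assms(1) by (cases "blocks x" rule: rev_exhaust) (auto simp: blocks_eq_Nil_iff)
  obtain pre where "blocks (a @ x @ s @ z) = pre @ blocks (x @ s @ z)"
    using blocks_append by blast
  moreover have "blocks (x @ s @ z) = bs @ [l @ ?L] @ blocks (s @ z)"
    using blocks_append_nonempty[of x "s @ z"] x by simp
  moreover obtain bs' where bs': "blocks (s @ z) = bs' @ blocks z" "?L @ concat bs' = s @ state_prefix z"
    using blocks_append by blast
  ultimately have factors: "set bs \<subseteq> RegFlat_factors A R" "l @ ?L \<in> RegFlat_factors A R"
      "set bs' \<subseteq> RegFlat_factors A R"
    using RegFlat_blocks(2)[OF assms(2)] by auto
  obtain X P where XP: "P \<in> S0 A" "X @ P \<in> kstar (calls_f A \<union> S1 A)"
      "skeleton X = map hd (bs @ [l])" "same_shape P ?L"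
    using last_block_replacement[OF factors(1,2)] proper_block_blocks[of l x] x list_all_state_prefix
    by auto
  show thesis
  proof
    show "P @ flatten bs' \<in> Flat A"
      using XP(1) flatten(1)[OF factors(3)] by (auto simp: Flat_def conc_def)
    show "X @ P @ flatten bs' \<in> kstar (calls_f A \<union> S1 A)"
      using XP(2) flatten(1)[OF factors(3)] kstar_append by (metis append_assoc)
    show "skeleton X = skeleton x"
      using XP(3) x by (simp add: skeleton_eq_map_hd_blocks)
    show "same_shape (P @ flatten bs') (s @ state_prefix z)"
      using same_shape_append[OF XP(4) flatten(2)[OF factors(3)]] bs'(2) by simp
  qed
qed

lemma flat_tail:
  assumes "s @ z \<in> RegFlat A R"
  shows "flatten (blocks z) \<in> kstar (calls_f A \<union> S1 A)"
    "skeleton (flatten (blocks z)) = skeleton z" "length (flatten (blocks z)) \<le> length z"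
proof -
  obtain bs where "blocks (s @ z) = bs @ blocks z" using blocks_append by blast
  then have factors: "set (blocks z) \<subseteq> RegFlat_factors A R"
    using RegFlat_blocks(2)[OF assms] by auto
  then show "flatten (blocks z) \<in> kstar (calls_f A \<union> S1 A)" by (rule flatten(1))
  have "skeleton (concat (blocks z)) = skeleton z"
    using proper_block_blocks[of _ z] skeleton_concat_proper[of "blocks z"]
    by (simp add: skeleton_eq_map_hd_blocks)
  moreover have "length (concat (blocks z)) \<le> length z"
    using arg_cong[OF state_prefix_concat_blocks[of z], of length] by simp
  ultimately show "skeleton (flatten (blocks z)) = skeleton z" "length (flatten (blocks z)) \<le> length z"
    using flatten(2)[OF factors] by (simp_all add: same_shape_def)
qed

text \<open>If \<open>u\<close> and \<open>v\<close> consist of states, the words \<open>u\<^sub>2 w z\<close> of the fooling set have the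
  state prefix \<open>u\<^sub>2 w \<dots>\<close>, which lies in some \<open>Suf R\<^sub>\<tau>\<close>.\<close>
lemma fooling_scheme_not_states:
  assumes scheme: "linear_fooling_scheme (nu_f A) u2 v2 u v Z"
    and sub: "fool_set u2 v2 u v Z \<subseteq> RegFlat A R"
  shows "\<not> (list_all is_FQ u \<and> list_all is_FQ v)"
proof
  assume states: "list_all is_FQ u \<and> list_all is_FQ v"
  obtain x z where "u = x @ u2" "z \<in> Z"
    using scheme unfolding linear_fooling_scheme_def by blast
  with states have u2: "list_all is_FQ u2" by simp
  have "\<exists>a b. a @ w @ b \<in> (\<Union>\<tau>. R \<tau>)" if w: "w \<in> kstar {u, v}" for w
  proof -
    have "list_all is_FQ w" using kstar_list_all[OF w] states by auto
    moreover have "u2 @ w @ z \<in> RegFlat A R"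
      using sub fool_setI[OF _ w \<open>z \<in> Z\<close>] by blast
    ultimately have "u2 @ w @ state_prefix z \<in> (\<Union>\<tau>. Suf (R \<tau>))"
      using RegFlat_blocks(1)[of "u2 @ w @ z"] u2 by (simp add: list_all_iff)
    then obtain \<tau> a where "a @ u2 @ w @ state_prefix z \<in> R \<tau>" by (auto simp: Suf_def)
    then have "(a @ u2) @ w @ state_prefix z \<in> (\<Union>\<tau>. R \<tau>)" by auto
    then show ?thesis by blast
  qed
  then have "u @ v = v @ u"
    using bounded_lang_UN_R by (intro bounded_lang_factors_commute) auto
  with linear_fooling_scheme_not_commute[OF scheme] show False by simp
qed

lemma nu_f_append_flatten_blocks:
  assumes "W' \<in> Flat A" "W @ z \<in> RegFlat A R" "W' \<noteq> []" "W \<noteq> []"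
    and "head_state W' = head_state W" "skeleton W' = skeleton W"
  shows "W' @ flatten (blocks z) \<in> Flat A" "nu_f A (W' @ flatten (blocks z)) = nu_f A (W @ z)"
proof -
  show flat: "W' @ flatten (blocks z) \<in> Flat A"
    using Flat_append_kstar[OF assms(1) flat_tail(1)[OF assms(2)]] .
  show "nu_f A (W' @ flatten (blocks z)) = nu_f A (W @ z)"
    using flat Flat_subset_AllFlat assms(2) RegFlat_subset_AllFlat
  proof (intro nu_f_cong)
    show "head_state (W' @ flatten (blocks z)) = head_state (W @ z)"
      using assms(3-5) by (simp add: head_state_append)
    show "skeleton (W' @ flatten (blocks z)) = skeleton (W @ z)"
      using assms(6) flat_tail(2)[OF assms(2)] by simp
  qed auto
qed

lemma Flat_fooling_scheme:
  assumes scheme: "linear_fooling_scheme (nu_f A) u2 v2 u v Z"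
    and sub: "fool_set u2 v2 u v Z \<subseteq> RegFlat A R"
    and c: "c \<in> {u, v}" "\<not> list_all is_FQ c"
  shows "contains_lin_fooling_set (Flat A) (nu_f A)"
proof -
  obtain x y z where u: "u = x @ u2" and v: "v = y @ v2" and z: "z \<in> Z"
    using scheme unfolding linear_fooling_scheme_def by blast
  have reg: "s @ w @ zz \<in> RegFlat A R" if "s \<in> {u2, v2}" "w \<in> kstar {u, v}" "zz \<in> Z" for s w zz
    using sub fool_setI[OF that] by blast
  have cuv: "c @ u \<in> kstar {u, v}" "c @ v \<in> kstar {u, v}"
    using c(1) by (auto intro: kstar_append kstar_singleton)
  have "\<not> list_all is_FQ (c @ x)" "u2 @ (c @ x) @ u2 @ z \<in> RegFlat A R"
    using c(2) reg[OF _ cuv(1) z, of u2] u by simp_all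
  then obtain X U2 where U2: "U2 \<in> Flat A" "X @ U2 \<in> kstar (calls_f A \<union> S1 A)"
      "skeleton X = skeleton (c @ x)" "same_shape U2 (u2 @ state_prefix z)"
    by (rule flat_replacement)
  have "\<not> list_all is_FQ (c @ y)" "v2 @ (c @ y) @ v2 @ z \<in> RegFlat A R"
    using c(2) reg[OF _ cuv(2) z, of v2] v by simp_all
  then obtain Y V2 where V2: "V2 \<in> Flat A" "Y @ V2 \<in> kstar (calls_f A \<union> S1 A)"
      "skeleton Y = skeleton (c @ y)" "same_shape V2 (v2 @ state_prefix z)"
    by (rule flat_replacement)
  define bk where "bk w = (if w = X @ U2 then c @ u else c @ v)" for w
  have "u2 \<noteq> []" "v2 \<noteq> []"
    using linear_fooling_scheme_neq[OF scheme] scheme unfolding linear_fooling_scheme_def by auto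
  have skeleton_bk: "skeleton w = skeleton (bk w)" if "w \<in> {X @ U2, Y @ V2}" for w
    using that U2(3,4) V2(3,4) u v by (auto simp: bk_def same_shape_def)
  have bk_kstar: "concat (map bk ws) \<in> kstar {u, v}" for ws
    using cuv by (intro kstar_concat) (auto simp: bk_def)
  have counterpart: "s' @ concat ws @ flatten (blocks zz) \<in> Flat A
      \<and> nu_f A (s' @ concat ws @ flatten (blocks zz)) = nu_f A (s @ concat (map bk ws) @ zz)"
    if "(s', s) \<in> {(U2, u2), (V2, v2)}" "set ws \<subseteq> {X @ U2, Y @ V2}" "zz \<in> Z" for s' s ws zz
  proof -
    have shape: "same_shape s' (s @ state_prefix z)" "s \<noteq> []"
      using that(1) U2(4) V2(4) \<open>u2 \<noteq> []\<close> \<open>v2 \<noteq> []\<close> by auto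
    then have "s' \<noteq> []" by (auto simp: same_shape_def)
    have "concat ws \<in> kstar (calls_f A \<union> S1 A)"
      using that(2) U2(2) V2(2) by (intro kstar_concat) auto
    then have "s' @ concat ws \<in> Flat A"
      using that(1) U2(1) V2(1) Flat_append_kstar by blast
    moreover have "(s @ concat (map bk ws)) @ zz \<in> RegFlat A R"
      using reg bk_kstar that by auto
    moreover have "head_state (s' @ concat ws) = head_state (s @ concat (map bk ws))"
      using same_shape_head_state[OF shape(1)] shape(2) \<open>s' \<noteq> []\<close> by (simp add: head_state_append)
    moreover have "skeleton (concat ws) = skeleton (concat (map bk ws))"
      using that(2) by (intro skeleton_concat_map skeleton_bk) auto
    then have "skeleton (s' @ concat ws) = skeleton (s @ concat (map bk ws))"
      using shape(1) by (simp add: same_shape_def)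
    ultimately show ?thesis
      using nu_f_append_flatten_blocks[of "s' @ concat ws" "s @ concat (map bk ws)" zz] shape(2) \<open>s' \<noteq> []\<close>
      by simp
  qed
  have "linear_fooling_scheme (nu_f A) U2 V2 (X @ U2) (Y @ V2) ((\<lambda>zz. flatten (blocks zz)) ` Z)"
  proof (rule linear_fooling_scheme_transfer[OF scheme])
    show "length U2 = length V2"
      using U2(4) V2(4) scheme by (simp add: same_shape_def linear_fooling_scheme_def)
    show "bk (X @ U2) \<in> upto_pow u v 2" "bk (Y @ V2) \<in> upto_pow u v 2"
      using c(1) by (auto simp: bk_def upto_pow_def intro!: exI[of _ "[c, _]"])
    show "length (flatten (blocks zz)) \<le> length zz" if "zz \<in> Z" for zz
      using flat_tail(3)[OF reg[of u2 "[]" zz]] that by simp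
  qed (use counterpart in auto)
  moreover have "fool_set U2 V2 (X @ U2) (Y @ V2) ((\<lambda>zz. flatten (blocks zz)) ` Z) \<subseteq> Flat A"
    using counterpart by (auto elim!: fool_setE)
  ultimately show ?thesis unfolding contains_lin_fooling_set_def by blast
qed

lemma RegFlat_to_Flat_fooling_set:
  assumes "contains_lin_fooling_set (RegFlat A R) (nu_f A)"
  shows "contains_lin_fooling_set (Flat A) (nu_f A)"
proof -
  obtain u2 v2 u v Z where scheme: "linear_fooling_scheme (nu_f A) u2 v2 u v Z"
    and sub: "fool_set u2 v2 u v Z \<subseteq> RegFlat A R"
    using assms unfolding contains_lin_fooling_set_def by blast
  moreover obtain c where "c \<in> {u, v}" "\<not> list_all is_FQ c"
    using fooling_scheme_not_states[OF scheme sub] by auto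
  ultimately show ?thesis by (rule Flat_fooling_scheme)
qed

end

theorem proposition14:
  fixes A :: "('a::finite, 'q::{finite,linorder}, 'g::{finite,linorder}) vpa"
    and R :: "('q \<Rightarrow> 'q) \<Rightarrow> ('a, 'q) fsym list set"
  assumes "wf_vpa A"
    and "lang A \<noteq> {}" and "lang A \<noteq> UNIV"
    and "bounded_lang (S0 A)"
    and "\<forall>\<tau>. bounded_overapprox (lquot \<tau> (S1 A)) (R \<tau>)"
    and "contains_lin_fooling_set (RegFlat A R) (nu_f A)"
  shows "contains_lin_fooling_set (Flat A) (nu_f A)"
proof -
  interpret S1_overapproximation A R
    using assms(5) by unfold_locales blast
  show ?thesis
    using assms(6) by (rule RegFlat_to_Flat_fooling_set)
qed

end
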